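(* Let $\{M_p\mid p\in P\}$ be a Morse decomposition of a multivector field on a finite simplicial complex $K$, with associated $P$-filtered chain complex $(C,d)$, let $(\bar C,\bar d)$ be a Conley complex of $(C,d)$, let $f:K\to\mathbb R$ be Lyapunov for the Morse decomposition, and let $P_f$ be an $f$-compatible order. Then the persistence modules $H(\mathbf C,P_f)$ and $H(\bar{\mathbf C},P_f)$ are isomorphic.
   Context: $K$ is a finite simplicial complex; a multivector field $\mathcal V$ on $K$ is a partition of $K$ into convex sets $V$ (if $\sigma,\tau\in V$ and $\sigma\le\mu\le\tau$ in the face order then $\mu\in V$); $F_{\mathcal V}(\sigma)=[\sigma]_{\mathcal V}\cup\{\tau:\tau\le\sigma\}$ where $[\sigma]_{\mathcal V}$ is the part containing $\sigma$; a path is a sequence $\sigma_1,\dots,\sigma_r$ with $\sigma_k\in F_{\mathcal V}(\sigma_{k-1})$. A Morse decomposition indexed by a finite poset $(P,\le_P)$ is a partition $K=\bigsqcup_{p\in P}M_p$ such that every path from $M_p$ to $M_q$ has $q\le_P p$. Let $m=|P|$. $(C,d)$: $C_p$ is the $\mathbb Z_2$-span of the simplices in $M_p$ (graded by dimension), $C=\bigoplus_pC_p$ the simplicial chains of $K$ over $\mathbb Z_2$, $d$ the simplicial boundary. For $P$-graded spaces and a linear map $h$, $h_{pq}=\pi_p h\iota_q$, and $h$ is $P$-filtered if $h_{pq}\ne0\Rightarrow p\le_P q$. A $P$-filtered chain complex is a $\mathbb Z_2$ chain complex with a $P$-gradation (compatible with degree) whose differential is $P$-filtered. Filtered chain maps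 are $P$-filtered chain maps; filtered chain maps $\varphi,\psi$ are filtered chain homotopic if $\psi-\varphi=d'S+Sd$ for some $P$-filtered degree-raising-by-one linear $S$; two $P$-filtered complexes are filtered chain homotopic if there are filtered chain maps $\varphi,\varphi'$ between them with $\varphi'\varphi$ and $\varphi\varphi'$ filtered chain homotopic to the identities. A Conley complex of $(C,d)$ is a $P$-filtered chain complex $(\bar C,\bar d)$ filtered chain homotopic to $(C,d)$ with $\bar d_{pp}=0$ for all $p$. $f:K\to\mathbb R$ is Lyapunov if $f$ is constant on each $M_p$, with value $f(p)$, and $p\le_P q\Rightarrow f(p)\le f(q)$. An $f$-compatible order $P_f$ is an enumeration $p_1,\dots,p_m$ of $P$ that is a linear extension of $\le_P$ with $f(p_1)\le\dots\le f(p_m)$. For a $P$-filtered chain complex $(D,\delta)$, $\mathbf D_{p_i}=\bigoplus_{j\le i}D_{p_j}$ with the restricted differential is a subcomplex, and $H(\mathbf D,P_f)$ is the persistence module $H_*(\mathbf D_{p_1})\to\dots\to H_*(\mathbf D_{p_m})$ with maps induced by inclusions; this applies to $(C,d)$ giving $H(\mathbf C,P_f)$ and to $(\bar C,\bar d)$ giving $H(\bar{\mathbf C},P_f)$. *)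

theory Defs
  imports Complex_Main "HOL-Library.Z2" "HOL-Library.Disjoint_Sets"
begin

definition simplicial_complex :: "'v set set \<Rightarrow> bool" where
  "simplicial_complex K \<longleftrightarrow> finite K \<and>
     (\<forall>\<sigma>\<in>K. finite \<sigma> \<and> \<sigma> \<noteq> {}) \<and>
     (\<forall>\<sigma>\<in>K. \<forall>\<tau>. \<tau> \<subseteq> \<sigma> \<and> \<tau> \<noteq> {} \<longrightarrow> \<tau> \<in> K)"

definition convex_in :: "'v set set \<Rightarrow> 'v set set \<Rightarrow> bool" where
  "convex_in K V \<longleftrightarrow> (\<forall>\<sigma>\<in>V. \<forall>\<tau>\<in>V. \<forall>\<mu>\<in>K. \<sigma> \<subseteq> \<mu> \<and> \<mu> \<subseteq> \<tau> \<longrightarrow> \<mu> \<in> V)"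

definition multivector_field :: "'v set set \<Rightarrow> 'v set set set \<Rightarrow> bool" where
  "multivector_field K \<V> \<longleftrightarrow> partition_on K \<V> \<and> (\<forall>V\<in>\<V>. convex_in K V)"

definition mv_class :: "'v set set set \<Rightarrow> 'v set \<Rightarrow> 'v set set" where
  "mv_class \<V> \<sigma> = (THE V. V \<in> \<V> \<and> \<sigma> \<in> V)"

definition F_map :: "'v set set \<Rightarrow> 'v set set set \<Rightarrow> 'v set \<Rightarrow> 'v set set" where
  "F_map K \<V> \<sigma> = mv_class \<V> \<sigma> \<union> {\<tau>\<in>K. \<tau> \<subseteq> \<sigma>}"

definition is_path :: "'v set set \<Rightarrow> 'v set set set \<Rightarrow> 'v set list \<Rightarrow> bool" where
  "is_path K \<V> xs \<longleftrightarrow> xs \<noteq> [] \<and> set xs \<subseteq> K \<and>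
     (\<forall>k. Suc k < length xs \<longrightarrow> xs ! Suc k \<in> F_map K \<V> (xs ! k))"

text \<open>Morse decomposition indexed by the finite poset \<open>(P, r)\<close>, \<open>(p,q) \<in> r\<close> meaning \<open>p \<le>\<^sub>P q\<close>.\<close>
definition morse_decomposition ::
  "'v set set \<Rightarrow> 'v set set set \<Rightarrow> 'p set \<Rightarrow> ('p \<times> 'p) set \<Rightarrow> ('p \<Rightarrow> 'v set set) \<Rightarrow> bool" where
  "morse_decomposition K \<V> P r M \<longleftrightarrow>
     finite P \<and> partial_order_on P r \<and>
     (\<Union>p\<in>P. M p) = K \<and>
     (\<forall>p\<in>P. \<forall>q\<in>P. p \<noteq> q \<longrightarrow> M p \<inter> M q = {}) \<and>
     (\<forall>p\<in>P. \<forall>q\<in>P. \<forall>xs. is_path K \<V> xs \<and> hd xs \<in> M p \<and> last xs \<in> M q \<longrightarrow> (q, p) \<in> r)"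

text \<open>A P-graded, degree-graded Z2 vector space is represented by a homogeneous basis
  \<open>gens\<close> with a P-grade and a degree for each basis element; chains are finitely supported
  functions \<open>gens \<Rightarrow> bit\<close>. A linear map is given by the images of basis elements.\<close>
record ('b, 'p) fcomplex =
  gens  :: "'b set"
  grade :: "'b \<Rightarrow> 'p"
  deg   :: "'b \<Rightarrow> int"
  bd    :: "'b \<Rightarrow> 'b \<Rightarrow> bit"

definition supp :: "('b \<Rightarrow> bit) \<Rightarrow> 'b set" where
  "supp c = {b. c b \<noteq> 0}"

definition lapply :: "('b \<Rightarrow> 'c \<Rightarrow> bit) \<Rightarrow> ('b \<Rightarrow> bit) \<Rightarrow> ('c \<Rightarrow> bit)" where
  "lapply h c = (\<lambda>y. \<Sum>b\<in>supp c. c b * h b y)"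

definition is_chain_in :: "'b set \<Rightarrow> ('b \<Rightarrow> bit) \<Rightarrow> bool" where
  "is_chain_in B c \<longleftrightarrow> finite (supp c) \<and> supp c \<subseteq> B"

definition hom_deg :: "('b, 'p, 'z) fcomplex_scheme \<Rightarrow> int \<Rightarrow> ('b \<Rightarrow> bit) \<Rightarrow> bool" where
  "hom_deg D n c \<longleftrightarrow> is_chain_in (gens D) c \<and> (\<forall>y\<in>supp c. deg D y = n)"

text \<open>\<open>h\<close> (from \<open>D1\<close> to \<open>D2\<close>) is \<open>P\<close>-filtered: \<open>h\<^sub>p\<^sub>q \<noteq> 0 \<Longrightarrow> p \<le>\<^sub>P q\<close>.\<close>
definition filtered_map ::
  "('p \<times> 'p) set \<Rightarrow> ('b, 'p, 'z) fcomplex_scheme \<Rightarrow> ('c, 'p, 'w) fcomplex_scheme \<Rightarrow> ('b \<Rightarrow> 'c \<Rightarrow> bit) \<Rightarrow> bool" where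
  "filtered_map r D1 D2 h \<longleftrightarrow> (\<forall>b\<in>gens D1. \<forall>y. h b y \<noteq> 0 \<longrightarrow> (grade D2 y, grade D1 b) \<in> r)"

definition filtered_complex :: "'p set \<Rightarrow> ('p \<times> 'p) set \<Rightarrow> ('b, 'p, 'z) fcomplex_scheme \<Rightarrow> bool" where
  "filtered_complex P r D \<longleftrightarrow>
     (\<forall>b\<in>gens D. grade D b \<in> P) \<and>
     (\<forall>b\<in>gens D. hom_deg D (deg D b - 1) (bd D b)) \<and>
     filtered_map r D D (bd D) \<and>
     (\<forall>b\<in>gens D. lapply (bd D) (bd D b) = (\<lambda>_. 0))"

definition filtered_chain_map ::
  "('p \<times> 'p) set \<Rightarrow> ('b, 'p, 'z) fcomplex_scheme \<Rightarrow> ('c, 'p, 'w) fcomplex_scheme \<Rightarrow> ('b \<Rightarrow> 'c \<Rightarrow> bit) \<Rightarrow> bool" where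
  "filtered_chain_map r D1 D2 \<phi> \<longleftrightarrow>
     (\<forall>b\<in>gens D1. hom_deg D2 (deg D1 b) (\<phi> b)) \<and>
     filtered_map r D1 D2 \<phi> \<and>
     (\<forall>b\<in>gens D1. lapply (bd D2) (\<phi> b) = lapply \<phi> (bd D1 b))"

definition filtered_homotopic ::
  "('p \<times> 'p) set \<Rightarrow> ('b, 'p, 'z) fcomplex_scheme \<Rightarrow> ('c, 'p, 'w) fcomplex_scheme \<Rightarrow>
   ('b \<Rightarrow> 'c \<Rightarrow> bit) \<Rightarrow> ('b \<Rightarrow> 'c \<Rightarrow> bit) \<Rightarrow> bool" where
  "filtered_homotopic r D1 D2 \<phi> \<psi> \<longleftrightarrow>
     (\<exists>S. (\<forall>b\<in>gens D1. hom_deg D2 (deg D1 b + 1) (S b)) \<and>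
          filtered_map r D1 D2 S \<and>
          (\<forall>b\<in>gens D1. (\<lambda>y. \<psi> b y - \<phi> b y) =
                         (\<lambda>y. lapply (bd D2) (S b) y + lapply S (bd D1 b) y)))"

definition comp_map :: "('b \<Rightarrow> 'c \<Rightarrow> bit) \<Rightarrow> ('c \<Rightarrow> 'e \<Rightarrow> bit) \<Rightarrow> ('b \<Rightarrow> 'e \<Rightarrow> bit)" where
  "comp_map \<phi> \<psi> = (\<lambda>b. lapply \<psi> (\<phi> b))"  \<comment> \<open>first \<open>\<phi>\<close>, then \<open>\<psi>\<close>\<close>

definition id_map :: "'b \<Rightarrow> 'b \<Rightarrow> bit" where
  "id_map = (\<lambda>b y. if y = b then 1 else 0)"

definition filtered_chain_homotopy_equivalent ::
  "('p \<times> 'p) set \<Rightarrow> ('b, 'p, 'z) fcomplex_scheme \<Rightarrow> ('c, 'p, 'w) fcomplex_scheme \<Rightarrow> bool" where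
  "filtered_chain_homotopy_equivalent r D1 D2 \<longleftrightarrow>
     (\<exists>\<phi> \<phi>'. filtered_chain_map r D1 D2 \<phi> \<and> filtered_chain_map r D2 D1 \<phi>' \<and>
        filtered_homotopic r D1 D1 id_map (comp_map \<phi> \<phi>') \<and>
        filtered_homotopic r D2 D2 id_map (comp_map \<phi>' \<phi>))"

definition conley_complex ::
  "'p set \<Rightarrow> ('p \<times> 'p) set \<Rightarrow> ('b, 'p, 'z) fcomplex_scheme \<Rightarrow> ('c, 'p, 'w) fcomplex_scheme \<Rightarrow> bool" where
  "conley_complex P r D Dbar \<longleftrightarrow>
     filtered_complex P r Dbar \<and> filtered_chain_homotopy_equivalent r D Dbar \<and>
     (\<forall>b\<in>gens Dbar. \<forall>y\<in>gens Dbar. grade Dbar y = grade Dbar b \<longrightarrow> bd Dbar b y = 0)"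

definition morse_chain_complex ::
  "'v set set \<Rightarrow> 'p set \<Rightarrow> ('p \<Rightarrow> 'v set set) \<Rightarrow> ('v set, 'p) fcomplex" where
  "morse_chain_complex K P M =
     \<lparr> gens = K,
       grade = (\<lambda>\<sigma>. THE p. p \<in> P \<and> \<sigma> \<in> M p),
       deg = (\<lambda>\<sigma>. int (card \<sigma>) - 1),
       bd = (\<lambda>\<sigma> \<tau>. if \<tau> \<in> K \<and> \<tau> \<subseteq> \<sigma> \<and> card \<tau> + 1 = card \<sigma> then 1 else 0) \<rparr>"

text \<open>\<open>f\<close> is Lyapunov; \<open>fv p\<close> is the constant value \<open>f(p)\<close> of \<open>f\<close> on \<open>M\<^sub>p\<close>.\<close>
definition lyapunov ::
  "'p set \<Rightarrow> ('p \<times> 'p) set \<Rightarrow> ('p \<Rightarrow> 'v set set) \<Rightarrow> ('v set \<Rightarrow> real) \<Rightarrow> ('p \<Rightarrow> real) \<Rightarrow> bool" where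
  "lyapunov P r M f fv \<longleftrightarrow>
     (\<forall>p\<in>P. \<forall>\<sigma>\<in>M p. f \<sigma> = fv p) \<and>
     (\<forall>p\<in>P. \<forall>q\<in>P. (p, q) \<in> r \<longrightarrow> fv p \<le> fv q)"

text \<open>An enumeration \<open>ps = [p\<^sub>1,\<dots>,p\<^sub>m]\<close> (0-indexed here).\<close>
definition compatible_order ::
  "'p set \<Rightarrow> ('p \<times> 'p) set \<Rightarrow> ('p \<Rightarrow> real) \<Rightarrow> 'p list \<Rightarrow> bool" where
  "compatible_order P r fv ps \<longleftrightarrow>
     distinct ps \<and> set ps = P \<and>
     (\<forall>i<length ps. \<forall>j<length ps. (ps ! i, ps ! j) \<in> r \<longrightarrow> i \<le> j) \<and>
     (\<forall>i j. i \<le> j \<and> j < length ps \<longrightarrow> fv (ps ! i) \<le> fv (ps ! j))"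

definition sub_chains :: "('b, 'p, 'z) fcomplex_scheme \<Rightarrow> 'p set \<Rightarrow> int \<Rightarrow> ('b \<Rightarrow> bit) set" where
  "sub_chains D Q n = {c. hom_deg D n c \<and> (\<forall>b\<in>supp c. grade D b \<in> Q)}"

definition cycles :: "('b, 'p, 'z) fcomplex_scheme \<Rightarrow> 'p set \<Rightarrow> int \<Rightarrow> ('b \<Rightarrow> bit) set" where
  "cycles D Q n = {c \<in> sub_chains D Q n. lapply (bd D) c = (\<lambda>_. 0)}"

definition boundaries :: "('b, 'p, 'z) fcomplex_scheme \<Rightarrow> 'p set \<Rightarrow> int \<Rightarrow> ('b \<Rightarrow> bit) set" where
  "boundaries D Q n = lapply (bd D) ` sub_chains D Q (n + 1)"

definition class_add :: "('b \<Rightarrow> bit) set \<Rightarrow> ('b \<Rightarrow> bit) set \<Rightarrow> ('b \<Rightarrow> bit) set" where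
  "class_add A B = {(\<lambda>x. a x + b x) | a b. a \<in> A \<and> b \<in> B}"

definition hclass :: "('b, 'p, 'z) fcomplex_scheme \<Rightarrow> 'p set \<Rightarrow> int \<Rightarrow> ('b \<Rightarrow> bit) \<Rightarrow> ('b \<Rightarrow> bit) set" where
  "hclass D Q n c = class_add {c} (boundaries D Q n)"

definition homology :: "('b, 'p, 'z) fcomplex_scheme \<Rightarrow> 'p set \<Rightarrow> int \<Rightarrow> ('b \<Rightarrow> bit) set set" where
  "homology D Q n = hclass D Q n ` cycles D Q n"

text \<open>Map induced by the inclusion into the larger subcomplex spanned by Q.\<close>
definition induced_incl :: "('b, 'p, 'z) fcomplex_scheme \<Rightarrow> 'p set \<Rightarrow> int \<Rightarrow> ('b \<Rightarrow> bit) set \<Rightarrow> ('b \<Rightarrow> bit) set" where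
  "induced_incl D Q n A = class_add A (boundaries D Q n)"

text \<open>\<open>\<^bold>D\<^sub>p\<^sub>i\<close>: grades \<open>p\<^sub>1,\<dots>,p\<^sub>i\<close> (0-indexed: \<open>ps!0,\<dots>,ps!i\<close>).\<close>
definition prefix_grades :: "'p list \<Rightarrow> nat \<Rightarrow> 'p set" where
  "prefix_grades ps i = set (take (Suc i) ps)"

text \<open>Isomorphism of the persistence modules \<open>H(\<^bold>D1,P\<^sub>f)\<close> and \<open>H(\<^bold>D2,P\<^sub>f)\<close>: for every index
  and every degree a linear (= additive, over Z2) bijection, commuting with the structure maps.\<close>
definition persistence_modules_isomorphic ::
  "'p list \<Rightarrow> ('b, 'p, 'z) fcomplex_scheme \<Rightarrow> ('c, 'p, 'w) fcomplex_scheme \<Rightarrow> bool" where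
  "persistence_modules_isomorphic ps D1 D2 \<longleftrightarrow>
     (\<exists>\<Phi> :: nat \<Rightarrow> int \<Rightarrow> ('b \<Rightarrow> bit) set \<Rightarrow> ('c \<Rightarrow> bit) set.
        (\<forall>i<length ps. \<forall>n.
           bij_betw (\<Phi> i n) (homology D1 (prefix_grades ps i) n) (homology D2 (prefix_grades ps i) n) \<and>
           (\<forall>A\<in>homology D1 (prefix_grades ps i) n. \<forall>B\<in>homology D1 (prefix_grades ps i) n.
              \<Phi> i n (class_add A B) = class_add (\<Phi> i n A) (\<Phi> i n B))) \<and>
        (\<forall>i n. Suc i < length ps \<longrightarrow>
           (\<forall>A\<in>homology D1 (prefix_grades ps i) n.
              \<Phi> (Suc i) n (induced_incl D1 (prefix_grades ps (Suc i)) n A) =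
              induced_incl D2 (prefix_grades ps (Suc i)) n (\<Phi> i n A))))"

end

theory Submission
  imports Defs "HOL-Library.Function_Algebras" "HOL-Library.Set_Algebras"
begin

(* Since P_f is a linear extension of the partial order, every prefix p_1, ..., p_i is a down-set
   of P, and a P-filtered map sends chains graded in a down-set to chains graded in the same
   down-set. Hence the filtered chain maps and homotopies of a filtered chain homotopy equivalence
   C ~ Cbar restrict to chain homotopy equivalences of the prefix subcomplexes, so a single filtered
   chain map induces isomorphisms H(C_{p_i}) -> H(Cbar_{p_i}) for all i at once; these commute with
   the maps induced by the inclusions. The Lyapunov function enters only through the order P_f,
   and the simplicial structure of K only through its finiteness. *)

(* Otherwise simp rewrites bit arithmetic into Boolean connectives, and sums over Z2 no longer
   behave like sums in a ring. *)
declare add_bit_eq_xor [simp del] mult_bit_eq_and [simp del]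

lemma bit_fun_diff_eq_add: "(a :: 'b \<Rightarrow> bit) - b = a + b"
  by (simp add: fun_eq_iff)

subsection \<open>Linear maps given on a basis\<close>

lemma lapply_eq_sum:
  assumes "finite S" "supp c \<subseteq> S"
  shows "lapply h c y = (\<Sum>b\<in>S. c b * h b y)"
  unfolding lapply_def
  by (rule sum.mono_neutral_left) (use assms in \<open>auto simp: supp_def\<close>)

lemma supp_lapply: "supp (lapply h c) \<subseteq> (\<Union>b\<in>supp c. supp (h b))"
proof
  fix y assume "y \<in> supp (lapply h c)"
  then have "(\<Sum>b\<in>supp c. c b * h b y) \<noteq> 0" by (simp add: supp_def lapply_def)
  then obtain b where "b \<in> supp c" "c b * h b y \<noteq> 0"
    by (meson sum.not_neutral_contains_not_neutral)
  then show "y \<in> (\<Union>b\<in>supp c. supp (h b))" by (auto simp: supp_def)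
qed

lemma finite_supp_lapply:
  assumes "finite (supp c)" "\<And>b. b \<in> supp c \<Longrightarrow> finite (supp (h b))"
  shows "finite (supp (lapply h c))"
  using supp_lapply[of h c] assms by (meson finite_UN_I finite_subset)

lemma supp_zero [simp]: "supp 0 = {}"
  by (simp add: supp_def)

lemma supp_add: "supp (a + b) \<subseteq> supp a \<union> supp b"
  by (auto simp: supp_def)

lemma lapply_zero [simp]: "lapply h 0 = 0"
  by (simp add: lapply_def fun_eq_iff)

lemma lapply_add:
  assumes "finite (supp a)" "finite (supp b)"
  shows "lapply h (a + b) = lapply h a + lapply h b"
proof
  fix y
  let ?S = "supp a \<union> supp b"
  have S: "finite ?S" using assms by simp
  have "lapply h (a + b) y = (\<Sum>x\<in>?S. (a x + b x) * h x y)"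
    using lapply_eq_sum[OF S supp_add] by simp
  also have "\<dots> = (\<Sum>x\<in>?S. a x * h x y) + (\<Sum>x\<in>?S. b x * h x y)"
    by (simp add: distrib_right sum.distrib)
  also have "\<dots> = (lapply h a + lapply h b) y"
    using lapply_eq_sum[OF S, of a h y] lapply_eq_sum[OF S, of b h y] by auto
  finally show "lapply h (a + b) y = (lapply h a + lapply h b) y" .
qed

lemma lapply_add_map: "lapply (\<lambda>b. h b + g b) c = lapply h c + lapply g c"
  by (simp add: lapply_def fun_eq_iff distrib_left sum.distrib)

lemma lapply_cong: "(\<And>b. b \<in> supp c \<Longrightarrow> h b = h' b) \<Longrightarrow> lapply h c = lapply h' c"
  unfolding lapply_def by auto

lemma lapply_lapply:
  assumes c: "finite (supp c)" and h: "\<And>b. b \<in> supp c \<Longrightarrow> finite (supp (h b))"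
  shows "lapply g (lapply h c) = lapply (\<lambda>b. lapply g (h b)) c"
proof
  fix z
  let ?T = "\<Union>b\<in>supp c. supp (h b)"
  have T: "finite ?T" using assms by auto
  have "lapply g (lapply h c) z = (\<Sum>y\<in>?T. (\<Sum>b\<in>supp c. c b * h b y) * g y z)"
    using lapply_eq_sum[OF T supp_lapply] by (simp add: lapply_def)
  also have "\<dots> = (\<Sum>b\<in>supp c. \<Sum>y\<in>?T. c b * (h b y * g y z))"
    by (simp add: sum_distrib_right mult.assoc sum.swap[of _ ?T])
  also have "\<dots> = (\<Sum>b\<in>supp c. c b * lapply g (h b) z)"
  proof (rule sum.cong[OF refl])
    fix b assume "b \<in> supp c"
    then have "lapply g (h b) z = (\<Sum>y\<in>?T. h b y * g y z)"
      by (intro lapply_eq_sum[OF T]) auto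
    then show "(\<Sum>y\<in>?T. c b * (h b y * g y z)) = c b * lapply g (h b) z"
      by (simp add: sum_distrib_left)
  qed
  finally show "lapply g (lapply h c) z = lapply (\<lambda>b. lapply g (h b)) c z"
    by (simp add: lapply_def)
qed

lemma lapply_id_map:
  assumes "finite (supp c)"
  shows "lapply id_map c = c"
proof
  fix y
  have "lapply id_map c y = (\<Sum>b\<in>supp c. if b = y then c b else 0)"
    by (simp add: lapply_def id_map_def eq_commute[of y] if_distrib cong: if_cong)
  then show "lapply id_map c y = c y"
    using assms by (simp add: supp_def)
qed

subsection \<open>Cosets of additive subgroups\<close>

definition add_subgroup :: "'a::ab_group_add set \<Rightarrow> bool" where
  "add_subgroup B \<longleftrightarrow> 0 \<in> B \<and> (\<forall>x\<in>B. \<forall>y\<in>B. x - y \<in> B)"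

lemma add_subgroup_add:
  assumes "add_subgroup B" "x \<in> B" "y \<in> B"
  shows "x + y \<in> B"
  using assms unfolding add_subgroup_def by (metis diff_0 diff_minus_eq_add)

lemma add_subgroup_plus_absorb:
  assumes "add_subgroup B" "add_subgroup B'" "B \<subseteq> B'"
  shows "B + B' = B'"
proof
  show "B + B' \<subseteq> B'"
    using assms add_subgroup_add[OF assms(2)] by (auto simp: set_plus_def)
  show "B' \<subseteq> B + B'"
    using assms(1) by (intro set_zero_plus2) (simp add: add_subgroup_def)
qed

lemma elt_set_plus_add_subgroup:
  assumes "add_subgroup B" "b \<in> B"
  shows "b +o B = B"
proof
  show "b +o B \<subseteq> B"
    using add_subgroup_add[OF assms(1,2)] by (auto simp: elt_set_plus_def)
  show "B \<subseteq> b +o B"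
  proof
    fix x assume "x \<in> B"
    then have "x - b \<in> B" using assms by (simp add: add_subgroup_def)
    then show "x \<in> b +o B" by (rule set_minus_imp_plus)
  qed
qed

lemma coset_shift:
  assumes "add_subgroup B" "b \<in> B"
  shows "(c + b) +o B = c +o B"
  by (simp add: set_plus_rearrange2[symmetric] elt_set_plus_add_subgroup[OF assms])

lemma coset_plus_coset:
  assumes "add_subgroup B"
  shows "(a +o B) + (b +o B) = (a + b) +o B"
  by (simp add: set_plus_rearrange add_subgroup_plus_absorb[OF assms assms])

lemma coset_plus_larger:
  assumes "add_subgroup B" "add_subgroup B'" "B \<subseteq> B'"
  shows "(c +o B) + B' = c +o B'"
  by (simp add: set_plus_rearrange3 add_subgroup_plus_absorb[OF assms])

lemma image_coset_plus:
  assumes B: "add_subgroup B" and B': "add_subgroup B'"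
    and g_add: "\<And>b. b \<in> B \<Longrightarrow> g (c + b) = g c + g b" and g_B: "g ` B \<subseteq> B'"
  shows "g ` (c +o B) + B' = g c +o B'"
proof
  have "g ` (c +o B) \<subseteq> g c +o B'"
    using g_add g_B by (auto simp: elt_set_plus_def)
  then have "g ` (c +o B) + B' \<subseteq> (g c +o B') + B'"
    by (rule set_plus_mono2) (rule order_refl)
  also have "\<dots> = g c +o B'" by (rule coset_plus_larger[OF B' B' order_refl])
  finally show "g ` (c +o B) + B' \<subseteq> g c +o B'" .
  have "c \<in> c +o B"
    using set_plus_intro2[of 0 B c] B by (simp add: add_subgroup_def)
  then show "g c +o B' \<subseteq> g ` (c +o B) + B'"
    by (intro set_plus_mono3 imageI)
qed

subsection \<open>Chains graded in a down-set\<close>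

definition grade_down_closed ::
  "('p \<times> 'p) set \<Rightarrow> ('b, 'p, 'z) fcomplex_scheme \<Rightarrow> 'p set \<Rightarrow> bool" where
  "grade_down_closed r D Q \<longleftrightarrow> (\<forall>b\<in>gens D. \<forall>p\<in>Q. (grade D b, p) \<in> r \<longrightarrow> grade D b \<in> Q)"

definition bd_finite_supp :: "('b, 'p, 'z) fcomplex_scheme \<Rightarrow> bool" where
  "bd_finite_supp D \<longleftrightarrow> (\<forall>b\<in>gens D. finite (supp (bd D b)))"

lemma sub_chains_finite_supp: "c \<in> sub_chains D Q n \<Longrightarrow> finite (supp c)"
  by (simp add: sub_chains_def hom_deg_def is_chain_in_def)

lemma sub_chains_supp_subset: "c \<in> sub_chains D Q n \<Longrightarrow> supp c \<subseteq> gens D"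
  by (simp add: sub_chains_def hom_deg_def is_chain_in_def)

lemma zero_in_sub_chains [simp]: "0 \<in> sub_chains D Q n"
  by (simp add: sub_chains_def hom_deg_def is_chain_in_def)

lemma sub_chains_add:
  assumes "a \<in> sub_chains D Q n" "b \<in> sub_chains D Q n"
  shows "a + b \<in> sub_chains D Q n"
  using assms supp_add[of a b] finite_subset[OF supp_add[of a b]]
  unfolding sub_chains_def hom_deg_def is_chain_in_def by blast

lemma sub_chains_mono: "Q \<subseteq> Q' \<Longrightarrow> sub_chains D Q n \<subseteq> sub_chains D Q' n"
  by (auto simp: sub_chains_def)

lemma lapply_in_sub_chains:
  assumes c: "c \<in> sub_chains D1 Q n"
    and h: "\<forall>b\<in>gens D1. hom_deg D2 (deg D1 b + k) (h b)"
    and filtered: "filtered_map r D1 D2 h"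
    and Q: "grade_down_closed r D2 Q"
  shows "lapply h c \<in> sub_chains D2 Q (n + k)"
proof -
  have c_gens: "supp c \<subseteq> gens D1"
    using c by (rule sub_chains_supp_subset)
  have "finite (supp (lapply h c))"
    using sub_chains_finite_supp[OF c] c_gens h
    by (intro finite_supp_lapply) (auto simp: hom_deg_def is_chain_in_def)
  moreover have "y \<in> gens D2 \<and> deg D2 y = n + k \<and> grade D2 y \<in> Q"
    if y: "y \<in> supp (lapply h c)" for y
  proof -
    obtain b where b: "b \<in> supp c" "y \<in> supp (h b)"
      using supp_lapply[of h c] y by blast
    then have "b \<in> gens D1" "grade D1 b \<in> Q" "deg D1 b = n"
      using c c_gens by (auto simp: sub_chains_def hom_deg_def)
    moreover have "(grade D2 y, grade D1 b) \<in> r"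
      using filtered b \<open>b \<in> gens D1\<close> by (auto simp: filtered_map_def supp_def)
    ultimately show ?thesis
      using h b Q by (fastforce simp: hom_deg_def is_chain_in_def grade_down_closed_def)
  qed
  ultimately show ?thesis
    by (auto simp: sub_chains_def hom_deg_def is_chain_in_def)
qed

lemma add_subgroup_boundaries: "add_subgroup (boundaries D Q n)"
proof -
  have "lapply (bd D) a - lapply (bd D) b \<in> boundaries D Q n"
    if "a \<in> sub_chains D Q (n + 1)" "b \<in> sub_chains D Q (n + 1)" for a b
    using that sub_chains_add[OF that]
    by (simp add: boundaries_def bit_fun_diff_eq_add lapply_add[symmetric] sub_chains_finite_supp)
  moreover have "0 \<in> boundaries D Q n"
    unfolding boundaries_def by (rule image_eqI[where x = 0]) simp_all
  ultimately show ?thesis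
    by (auto simp: add_subgroup_def boundaries_def)
qed

lemma boundaries_finite_supp:
  assumes "bd_finite_supp D" "x \<in> boundaries D Q n"
  shows "finite (supp x)"
proof -
  obtain a where a: "a \<in> sub_chains D Q (n + 1)" "x = lapply (bd D) a"
    using assms(2) by (auto simp: boundaries_def)
  then show ?thesis
    using assms(1) sub_chains_supp_subset[OF a(1)]
    by (auto simp: bd_finite_supp_def intro: finite_supp_lapply sub_chains_finite_supp)
qed

lemma boundaries_mono: "Q \<subseteq> Q' \<Longrightarrow> boundaries D Q n \<subseteq> boundaries D Q' n"
  unfolding boundaries_def using sub_chains_mono by blast

lemma hclass_eq_coset: "hclass D Q n c = c +o boundaries D Q n"
  by (auto simp: hclass_def class_add_def elt_set_plus_def plus_fun_def)

lemma class_add_eq_plus: "class_add A B = A + B"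
  by (auto simp: class_add_def set_plus_def plus_fun_def)

lemma lapply_bd_chain_map:
  assumes c: "finite (supp c)" "supp c \<subseteq> gens D1" and "bd_finite_supp D1"
    and "filtered_chain_map r D1 D2 \<phi>"
  shows "lapply (bd D2) (lapply \<phi> c) = lapply \<phi> (lapply (bd D1) c)"
proof -
  have "\<And>b. b \<in> supp c \<Longrightarrow> finite (supp (\<phi> b)) \<and> finite (supp (bd D1 b)) \<and>
                            lapply (bd D2) (\<phi> b) = lapply \<phi> (bd D1 b)"
    using assms unfolding filtered_chain_map_def hom_deg_def is_chain_in_def bd_finite_supp_def
    by blast
  then show ?thesis
    using c(1) by (simp add: lapply_lapply cong: lapply_cong)
qed

lemma lapply_chain_homotopy:
  assumes c: "finite (supp c)" "supp c \<subseteq> gens D1" and "bd_finite_supp D1"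
    and S: "\<forall>b\<in>gens D1. finite (supp (S b))"
    and homotopy: "\<forall>b\<in>gens D1. (\<lambda>y. \<psi> b y - \<phi> b y) =
                                (\<lambda>y. lapply (bd D2) (S b) y + lapply S (bd D1 b) y)"
  shows "lapply \<psi> c = lapply \<phi> c + lapply (bd D2) (lapply S c) + lapply S (lapply (bd D1) c)"
proof -
  have "\<psi> b = \<phi> b + (lapply (bd D2) (S b) + lapply S (bd D1 b))" if "b \<in> supp c" for b
  proof -
    have "\<psi> b - \<phi> b = lapply (bd D2) (S b) + lapply S (bd D1 b)"
      using homotopy c(2) that by (auto simp: fun_eq_iff)
    then show ?thesis by (metis add.commute diff_add_cancel)
  qed
  then have "lapply \<psi> c = lapply (\<lambda>b. \<phi> b + (lapply (bd D2) (S b) + lapply S (bd D1 b))) c"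
    by (rule lapply_cong)
  also have "\<dots> = lapply \<phi> c + lapply (bd D2) (lapply S c) + lapply S (lapply (bd D1) c)"
    using assms unfolding bd_finite_supp_def
    by (simp add: lapply_add_map lapply_lapply subset_iff add.assoc)
  finally show ?thesis .
qed

subsection \<open>Maps induced on the homology of a subcomplex\<close>

definition induced_map :: "('c, 'p, 'w) fcomplex_scheme \<Rightarrow> ('b \<Rightarrow> 'c \<Rightarrow> bit) \<Rightarrow> 'p set \<Rightarrow> int \<Rightarrow>
    ('b \<Rightarrow> bit) set \<Rightarrow> ('c \<Rightarrow> bit) set"
  where "induced_map D2 h Q n A = lapply h ` A + boundaries D2 Q n"

lemma chain_map_in_sub_chains:
  assumes "c \<in> sub_chains D1 Q n" "filtered_chain_map r D1 D2 \<phi>" "grade_down_closed r D2 Q"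
  shows "lapply \<phi> c \<in> sub_chains D2 Q n"
  using lapply_in_sub_chains[OF assms(1), of D2 0 \<phi> r] assms(2,3)
  unfolding filtered_chain_map_def by simp

lemma chain_map_in_cycles:
  assumes c: "c \<in> cycles D1 Q n" and D1: "bd_finite_supp D1"
    and \<phi>: "filtered_chain_map r D1 D2 \<phi>" and Q: "grade_down_closed r D2 Q"
  shows "lapply \<phi> c \<in> cycles D2 Q n"
proof -
  have c_chain: "c \<in> sub_chains D1 Q n" and c_cycle: "lapply (bd D1) c = 0"
    using c by (auto simp: cycles_def zero_fun_def)
  have "lapply (bd D2) (lapply \<phi> c) = 0"
    using lapply_bd_chain_map[OF sub_chains_finite_supp[OF c_chain]
        sub_chains_supp_subset[OF c_chain] D1 \<phi>] c_cycle by simp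
  then show ?thesis
    using chain_map_in_sub_chains[OF c_chain \<phi> Q] by (simp add: cycles_def zero_fun_def)
qed

lemma induced_map_hclass:
  assumes c: "c \<in> sub_chains D1 Q n" and D1: "bd_finite_supp D1"
    and \<phi>: "filtered_chain_map r D1 D2 \<phi>" and Q: "grade_down_closed r D2 Q"
  shows "induced_map D2 \<phi> Q n (hclass D1 Q n c) = hclass D2 Q n (lapply \<phi> c)"
  unfolding induced_map_def hclass_eq_coset
proof (rule image_coset_plus[OF add_subgroup_boundaries add_subgroup_boundaries])
  fix b assume "b \<in> boundaries D1 Q n"
  then show "lapply \<phi> (c + b) = lapply \<phi> c + lapply \<phi> b"
    using lapply_add sub_chains_finite_supp[OF c] boundaries_finite_supp[OF D1] by blast
next
  show "lapply \<phi> ` boundaries D1 Q n \<subseteq> boundaries D2 Q n"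
  proof
    fix b assume "b \<in> lapply \<phi> ` boundaries D1 Q n"
    then obtain x where x: "x \<in> sub_chains D1 Q (n + 1)" "b = lapply \<phi> (lapply (bd D1) x)"
      by (auto simp: boundaries_def)
    then have "b = lapply (bd D2) (lapply \<phi> x)"
      using lapply_bd_chain_map[OF sub_chains_finite_supp[OF x(1)]
          sub_chains_supp_subset[OF x(1)] D1 \<phi>] by simp
    then show "b \<in> boundaries D2 Q n"
      using chain_map_in_sub_chains[OF x(1) \<phi> Q] by (simp add: boundaries_def)
  qed
qed

lemma induced_map_in_homology:
  assumes "A \<in> homology D1 Q n" "bd_finite_supp D1"
    and "filtered_chain_map r D1 D2 \<phi>" "grade_down_closed r D2 Q"
  shows "induced_map D2 \<phi> Q n A \<in> homology D2 Q n"
  using assms induced_map_hclass chain_map_in_cycles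
  by (fastforce simp: homology_def cycles_def)

lemma induced_map_homotopy_inverse:
  assumes D1: "bd_finite_supp D1" and D2: "bd_finite_supp D2"
    and \<phi>: "filtered_chain_map r D1 D2 \<phi>" and \<phi>': "filtered_chain_map r D2 D1 \<phi>'"
    and homotopic: "filtered_homotopic r D1 D1 id_map (comp_map \<phi> \<phi>')"
    and Q1: "grade_down_closed r D1 Q" and Q2: "grade_down_closed r D2 Q"
    and A: "A \<in> homology D1 Q n"
  shows "induced_map D1 \<phi>' Q n (induced_map D2 \<phi> Q n A) = A"
proof -
  obtain c where c: "c \<in> sub_chains D1 Q n" "lapply (bd D1) c = 0" and A_c: "A = hclass D1 Q n c"
    using A by (auto simp: homology_def cycles_def zero_fun_def)
  have c_fin: "finite (supp c)" and c_gens: "supp c \<subseteq> gens D1"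
    using sub_chains_finite_supp[OF c(1)] sub_chains_supp_subset[OF c(1)] .
  obtain S where S: "\<forall>b\<in>gens D1. hom_deg D1 (deg D1 b + 1) (S b)" "filtered_map r D1 D1 S"
    and S_homotopy: "\<forall>b\<in>gens D1. (\<lambda>y. comp_map \<phi> \<phi>' b y - id_map b y) =
                                  (\<lambda>y. lapply (bd D1) (S b) y + lapply S (bd D1 b) y)"
    using homotopic unfolding filtered_homotopic_def by blast
  have "lapply \<phi>' (lapply \<phi> c) = lapply (comp_map \<phi> \<phi>') c"
    using \<phi> c_fin c_gens unfolding comp_map_def filtered_chain_map_def hom_deg_def is_chain_in_def
    by (subst lapply_lapply) auto
  also have "\<dots> = c + lapply (bd D1) (lapply S c)"
    using lapply_chain_homotopy[OF c_fin c_gens D1 _ S_homotopy] S(1) c(2) lapply_id_map[OF c_fin]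
    by (simp add: hom_deg_def is_chain_in_def)
  finally have homotopy: "lapply \<phi>' (lapply \<phi> c) = c + lapply (bd D1) (lapply S c)" .
  have boundary: "lapply (bd D1) (lapply S c) \<in> boundaries D1 Q n"
    using lapply_in_sub_chains[OF c(1) S Q1] by (simp add: boundaries_def)
  have "induced_map D1 \<phi>' Q n (induced_map D2 \<phi> Q n A) = hclass D1 Q n (lapply \<phi>' (lapply \<phi> c))"
    using induced_map_hclass[OF c(1) D1 \<phi> Q2] chain_map_in_sub_chains[OF c(1) \<phi> Q2] A_c
    by (simp add: induced_map_hclass[OF _ D2 \<phi>' Q1])
  also have "\<dots> = A"
    unfolding homotopy A_c hclass_eq_coset by (rule coset_shift[OF add_subgroup_boundaries boundary])
  finally show ?thesis .
qed

lemma induced_map_class_add: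
  assumes D1: "bd_finite_supp D1" and \<phi>: "filtered_chain_map r D1 D2 \<phi>"
    and Q: "grade_down_closed r D2 Q"
    and A: "A \<in> homology D1 Q n" and B: "B \<in> homology D1 Q n"
  shows "induced_map D2 \<phi> Q n (class_add A B) =
         class_add (induced_map D2 \<phi> Q n A) (induced_map D2 \<phi> Q n B)"
proof -
  obtain a b where a: "a \<in> sub_chains D1 Q n" "A = hclass D1 Q n a"
    and b: "b \<in> sub_chains D1 Q n" "B = hclass D1 Q n b"
    using A B by (auto simp: homology_def cycles_def)
  have "class_add A B = hclass D1 Q n (a + b)"
    by (simp add: a(2) b(2) class_add_eq_plus hclass_eq_coset coset_plus_coset add_subgroup_boundaries)
  then have "induced_map D2 \<phi> Q n (class_add A B) = hclass D2 Q n (lapply \<phi> (a + b))"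
    using induced_map_hclass[OF sub_chains_add[OF a(1) b(1)] D1 \<phi> Q] by simp
  also have "\<dots> = hclass D2 Q n (lapply \<phi> a + lapply \<phi> b)"
    using sub_chains_finite_supp[OF a(1)] sub_chains_finite_supp[OF b(1)] by (simp add: lapply_add)
  also have "\<dots> = class_add (hclass D2 Q n (lapply \<phi> a)) (hclass D2 Q n (lapply \<phi> b))"
    by (simp add: class_add_eq_plus hclass_eq_coset coset_plus_coset add_subgroup_boundaries)
  also have "\<dots> = class_add (induced_map D2 \<phi> Q n A) (induced_map D2 \<phi> Q n B)"
    using induced_map_hclass[OF a(1) D1 \<phi> Q] induced_map_hclass[OF b(1) D1 \<phi> Q] a(2) b(2) by simp
  finally show ?thesis .
qed

lemma induced_incl_hclass:
  assumes "Q \<subseteq> Q'"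
  shows "induced_incl D Q' n (hclass D Q n c) = hclass D Q' n c"
  unfolding induced_incl_def class_add_eq_plus hclass_eq_coset
  by (rule coset_plus_larger[OF add_subgroup_boundaries add_subgroup_boundaries boundaries_mono[OF assms]])

lemma induced_map_induced_incl:
  assumes D1: "bd_finite_supp D1" and \<phi>: "filtered_chain_map r D1 D2 \<phi>"
    and Q: "grade_down_closed r D2 Q" and Q': "grade_down_closed r D2 Q'" and "Q \<subseteq> Q'"
    and A: "A \<in> homology D1 Q n"
  shows "induced_map D2 \<phi> Q' n (induced_incl D1 Q' n A) =
         induced_incl D2 Q' n (induced_map D2 \<phi> Q n A)"
proof -
  obtain a where a: "a \<in> sub_chains D1 Q n" "A = hclass D1 Q n a"
    using A by (auto simp: homology_def cycles_def)
  have "a \<in> sub_chains D1 Q' n"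
    using a(1) sub_chains_mono[OF \<open>Q \<subseteq> Q'\<close>] by blast
  then show ?thesis
    by (simp add: a induced_incl_hclass[OF \<open>Q \<subseteq> Q'\<close>] induced_map_hclass[OF _ D1 \<phi>] Q Q')
qed

lemma persistence_modules_isomorphic_if_filtered_homotopy_equivalent:
  assumes D1: "bd_finite_supp D1" and D2: "bd_finite_supp D2"
    and equivalent: "filtered_chain_homotopy_equivalent r D1 D2"
    and Q1: "\<And>i. grade_down_closed r D1 (prefix_grades ps i)"
    and Q2: "\<And>i. grade_down_closed r D2 (prefix_grades ps i)"
  shows "persistence_modules_isomorphic ps D1 D2"
proof -
  obtain \<phi> \<phi>' where \<phi>: "filtered_chain_map r D1 D2 \<phi>" and \<phi>': "filtered_chain_map r D2 D1 \<phi>'"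
    and homotopic: "filtered_homotopic r D1 D1 id_map (comp_map \<phi> \<phi>')"
      "filtered_homotopic r D2 D2 id_map (comp_map \<phi>' \<phi>)"
    using equivalent unfolding filtered_chain_homotopy_equivalent_def by blast
  have prefix_mono: "prefix_grades ps i \<subseteq> prefix_grades ps (Suc i)" for i
    unfolding prefix_grades_def by (rule set_take_subset_set_take) simp
  have "bij_betw (induced_map D2 \<phi> Q n) (homology D1 Q n) (homology D2 Q n)"
    if Q1: "grade_down_closed r D1 Q" and Q2: "grade_down_closed r D2 Q" for Q n
    using induced_map_homotopy_inverse[OF D1 D2 \<phi> \<phi>' homotopic(1) Q1 Q2]
      induced_map_homotopy_inverse[OF D2 D1 \<phi>' \<phi> homotopic(2) Q2 Q1]
      induced_map_in_homology[OF _ D1 \<phi> Q2] induced_map_in_homology[OF _ D2 \<phi>' Q1]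
    by (intro bij_betw_byWitness[where f' = "induced_map D1 \<phi>' Q n"]) auto
  then show ?thesis
    unfolding persistence_modules_isomorphic_def using Q1 Q2 prefix_mono
    by (intro exI[of _ "\<lambda>i. induced_map D2 \<phi> (prefix_grades ps i)"])
      (simp add: induced_map_class_add[OF D1 \<phi>] induced_map_induced_incl[OF D1 \<phi>])
qed

lemma prefix_grades_down_closed:
  assumes order: "compatible_order P r fv ps" and grades: "\<forall>b\<in>gens D. grade D b \<in> P"
  shows "grade_down_closed r D (prefix_grades ps i)"
  unfolding grade_down_closed_def
proof (intro ballI impI)
  fix b p assume b: "b \<in> gens D" and "p \<in> prefix_grades ps i" and rel: "(grade D b, p) \<in> r"
  then obtain j where j: "j < length ps" "j \<le> i" "ps ! j = p"
    by (auto simp: prefix_grades_def in_set_conv_nth)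
  have "grade D b \<in> set ps"
    using order grades b by (simp add: compatible_order_def)
  then obtain k where k: "k < length ps" "ps ! k = grade D b"
    by (auto simp: in_set_conv_nth)
  have "k \<le> j"
    using order j k rel by (auto simp: compatible_order_def)
  then show "grade D b \<in> prefix_grades ps i"
    using j k by (auto simp: prefix_grades_def in_set_conv_nth intro!: exI[of _ k])
qed

lemma bd_finite_supp_morse_chain_complex:
  assumes "finite K"
  shows "bd_finite_supp (morse_chain_complex K P M)"
  using assms by (auto simp: bd_finite_supp_def morse_chain_complex_def supp_def
      intro: finite_subset[of _ K])

lemma grade_morse_chain_complex:
  assumes "morse_decomposition K \<V> P r M"
  shows "\<forall>\<sigma>\<in>gens (morse_chain_complex K P M). grade (morse_chain_complex K P M) \<sigma> \<in> P"
proof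
  fix \<sigma> assume "\<sigma> \<in> gens (morse_chain_complex K P M)"
  then have unique: "\<exists>!p. p \<in> P \<and> \<sigma> \<in> M p"
    using assms unfolding morse_decomposition_def morse_chain_complex_def by auto
  show "grade (morse_chain_complex K P M) \<sigma> \<in> P"
    using theI'[OF unique] unfolding morse_chain_complex_def by simp
qed

lemma bd_finite_supp_filtered_complex: "filtered_complex P r D \<Longrightarrow> bd_finite_supp D"
  by (simp add: filtered_complex_def bd_finite_supp_def hom_deg_def is_chain_in_def)

theorem proposition9:
  fixes K :: "'v set set" and \<V> :: "'v set set set"
    and P :: "'p set" and r :: "('p \<times> 'p) set" and M :: "'p \<Rightarrow> 'v set set"
    and Cbar :: "('b, 'p) fcomplex"
    and f :: "'v set \<Rightarrow> real" and fv :: "'p \<Rightarrow> real" and ps :: "'p list"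
  assumes "simplicial_complex K"
    and "multivector_field K \<V>"
    and "morse_decomposition K \<V> P r M"
    and "conley_complex P r (morse_chain_complex K P M) Cbar"
    and "lyapunov P r M f fv"
    and "compatible_order P r fv ps"
  shows "persistence_modules_isomorphic ps (morse_chain_complex K P M) Cbar"
proof (rule persistence_modules_isomorphic_if_filtered_homotopy_equivalent)
  have Cbar: "filtered_complex P r Cbar"
    using assms(4) by (simp add: conley_complex_def)
  show "bd_finite_supp (morse_chain_complex K P M)"
    using assms(1) by (simp add: simplicial_complex_def bd_finite_supp_morse_chain_complex)
  show "bd_finite_supp Cbar"
    using Cbar by (rule bd_finite_supp_filtered_complex)
  show "filtered_chain_homotopy_equivalent r (morse_chain_complex K P M) Cbar"
    using assms(4) by (simp add: conley_complex_def)
  show "grade_down_closed r (morse_chain_complex K P M) (prefix_grades ps i)" for i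
    using assms(6) grade_morse_chain_complex[OF assms(3)] by (rule prefix_grades_down_closed)
  show "grade_down_closed r Cbar (prefix_grades ps i)" for i
    using assms(6) Cbar by (auto simp: filtered_complex_def intro: prefix_grades_down_closed)
qed

end
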